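(* Let $n\ge 1$, $d>0$, $\hbar>0$, and let $f:\mathbb{R}_{\ge0}^n\to[0,\infty)$ be a toric profile function as described in the context, homogeneous of degree $d$, with level set $N=f^{-1}(1)$. (a) If $N$ is strictly convex, then for every $m\in\mathbb{N}_0^n$ $$ f(\hbar m)=\Bigl(\sup_{(k,a)\in\mathcal{A}}\frac{\hbar\langle m,k\rangle}{a}\Bigr)^d .$$ (b) If $N$ is strictly concave, then for every $m\in\mathbb{N}_0^n$ $$ f(\hbar m)=\Bigl(\inf_{(k,a)\in\mathcal{A}}\frac{\hbar\langle m,k\rangle}{a}\Bigr)^d .$$ Consequently the EBK spectrum $\sigma_{\mathrm{EBK}}=\{f(\hbar m)\mid m\in\mathbb{N}_0^n\}$ consists exactly of these values.
   Context: Setting: $f:\mathbb{R}_{\ge0}^n\to[0,\infty)$ is continuous, smooth and positive on $\mathbb{R}_{\ge0}^n\setminus\{0\}$ (smooth up to the boundary faces of the orthant), and homogeneous of degree $d$, i.e. $f(tp)=t^df(p)$ for all $t>0$. The level set $N:=f^{-1}(1)$ is regular ($\nabla f\neq0$ on $N$). Its outward unit normal is $n(p)=\nabla f(p)/|\nabla f(p)|$, and it is assumed that $n(p)\in[0,\infty)^n$ for all $p\in N$. The toric Hamiltonian is $H:\mathbb{C}^n\to\mathbb{R}$, $H(z)=f(\tfrac12|z_1|^2,\dots,\tfrac12|z_n|^2)$, and its EBK spectrum (without Maslov correction) is $\sigma_{\mathrm{EBK}}=\{f(\hbar m)\mid m\in\mathbb{N}_0^n\}$. $N$ is called strictly convex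 if the set $\{p\in\mathbb{R}_{\ge0}^n: f(p)\le1\}$ is convex and $N$ has everywhere positive normal curvatures with respect to $n$; strictly concave if $\{p\in\mathbb{R}_{\ge0}^n: f(p)\ge 1\}$ is convex and $N$ has everywhere negative normal curvatures with respect to $n$. The marked action spectrum of $H^{-1}(1)$ is $$\mathcal{A}:=\{(k,\langle p,k\rangle)\mid k\in\mathbb{Z}^n\setminus\{0\},\ p\in N,\ n(p)=\lambda k\text{ for some }\lambda>0\}\subset\mathbb{Z}^n\times(0,\infty).$$ *)

theory Defs
  imports "HOL-Analysis.Analysis"
begin

definition orthant :: "(real ^ 'n) set" where
  "orthant = {p. \<forall>i. 0 \<le> p $ i}"

definition is_partial_on :: "(real ^ 'n) set \<Rightarrow> (real ^ 'n \<Rightarrow> real) \<Rightarrow> 'n \<Rightarrow> (real ^ 'n \<Rightarrow> real) \<Rightarrow> bool" where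
  "is_partial_on U g i g' \<longleftrightarrow>
     (\<forall>x\<in>U. ((\<lambda>t. g (x + t *\<^sub>R axis i 1)) has_real_derivative g' x) (at 0))"

text \<open>C-infinity on an open set: all partial derivatives of all orders exist and are continuous.\<close>
definition smooth_on :: "(real ^ 'n) set \<Rightarrow> (real ^ 'n \<Rightarrow> real) \<Rightarrow> bool" where
  "smooth_on U F \<longleftrightarrow> open U \<and>
     (\<exists>S. F \<in> S \<and> (\<forall>g\<in>S. continuous_on U g \<and> (\<forall>i. \<exists>g'\<in>S. is_partial_on U g i g')))"

text \<open>Gradient of f at p, taken within the orthant (one-sided at boundary faces).\<close>
definition grad :: "(real ^ 'n \<Rightarrow> real) \<Rightarrow> real ^ 'n \<Rightarrow> real ^ 'n" where
  "grad f p = (SOME g. (f has_derivative (\<lambda>h. g \<bullet> h)) (at p within orthant))"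

definition level_set :: "(real ^ 'n \<Rightarrow> real) \<Rightarrow> (real ^ 'n) set" where
  "level_set f = {p \<in> orthant. f p = 1}"

definition unit_normal :: "(real ^ 'n \<Rightarrow> real) \<Rightarrow> real ^ 'n \<Rightarrow> real ^ 'n" where
  "unit_normal f p = (1 / norm (grad f p)) *\<^sub>R grad f p"

text \<open>Normal curvature of N at p in tangent direction v with respect to n:
  <dn_p(v), v> / |v|^2 (Weingarten map), the sign convention for which
  a strictly convex sublevel set gives positive curvature.\<close>
definition normal_curvature :: "(real ^ 'n \<Rightarrow> real) \<Rightarrow> real ^ 'n \<Rightarrow> real ^ 'n \<Rightarrow> real" where
  "normal_curvature f p v =
     ((SOME L. (unit_normal f has_derivative L) (at p within orthant)) v \<bullet> v) / (norm v)\<^sup>2"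

definition tangent_dirs :: "(real ^ 'n \<Rightarrow> real) \<Rightarrow> real ^ 'n \<Rightarrow> (real ^ 'n) set" where
  "tangent_dirs f p = {v. v \<noteq> 0 \<and> grad f p \<bullet> v = 0}"

definition strictly_convex_level :: "(real ^ 'n \<Rightarrow> real) \<Rightarrow> bool" where
  "strictly_convex_level f \<longleftrightarrow> convex {p \<in> orthant. f p \<le> 1} \<and>
     (\<forall>p\<in>level_set f. \<forall>v\<in>tangent_dirs f p. normal_curvature f p v > 0)"

definition strictly_concave_level :: "(real ^ 'n \<Rightarrow> real) \<Rightarrow> bool" where
  "strictly_concave_level f \<longleftrightarrow> convex {p \<in> orthant. f p \<ge> 1} \<and>
     (\<forall>p\<in>level_set f. \<forall>v\<in>tangent_dirs f p. normal_curvature f p v < 0)"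

definition int_vec :: "int ^ 'n \<Rightarrow> real ^ 'n" where
  "int_vec k = (\<chi> i. real_of_int (k $ i))"

definition nat_vec :: "nat ^ 'n \<Rightarrow> real ^ 'n" where
  "nat_vec m = (\<chi> i. real (m $ i))"

definition marked_action_spectrum :: "(real ^ 'n \<Rightarrow> real) \<Rightarrow> ((int ^ 'n) \<times> real) set" where
  "marked_action_spectrum f =
     {(k, p \<bullet> int_vec k) | k p. k \<noteq> 0 \<and> p \<in> level_set f \<and>
        (\<exists>c>0. unit_normal f p = c *\<^sub>R int_vec k)}"

text \<open>EBK spectrum (without Maslov correction).\<close>
definition sigma_EBK :: "(real ^ 'n \<Rightarrow> real) \<Rightarrow> real \<Rightarrow> real set" where
  "sigma_EBK f hbar = {f (hbar *\<^sub>R nat_vec m) | m. True}"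

definition toric_profile :: "(real ^ 'n \<Rightarrow> real) \<Rightarrow> real \<Rightarrow> bool" where
  "toric_profile f d \<longleftrightarrow>
     continuous_on orthant f \<and>
     (\<forall>p\<in>orthant. 0 \<le> f p) \<and>
     (\<forall>p\<in>orthant - {0}. 0 < f p) \<and>
     (\<exists>U F. open U \<and> orthant - {0} \<subseteq> U \<and> smooth_on U F \<and> (\<forall>p\<in>orthant - {0}. F p = f p)) \<and>
     (\<forall>p\<in>orthant. \<forall>t>0. f (t *\<^sub>R p) = t powr d * f p) \<and>
     (\<forall>p\<in>level_set f. grad f p \<noteq> 0) \<and>
     (\<forall>p\<in>level_set f. unit_normal f p \<in> orthant)"

end

theory Submission
  imports Defs
begin

text \<open>Let \<open>g = f powr (1/d)\<close>, a positively \<open>1\<close>-homogeneous gauge with \<open>N = {g = 1}\<close>, so that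
  \<open>f x = g x powr d\<close>. If \<open>(k, a)\<close> is in the marked action spectrum, realised at \<open>p \<in> N\<close>, then the
  hyperplane \<open>\<langle>q, k\<rangle> = a\<close> supports the sublevel set \<open>{f \<le> 1}\<close> (convex case) resp. the superlevel
  set \<open>{f \<ge> 1}\<close> (concave case) at \<open>p\<close>; applied to \<open>x / g x \<in> N\<close> this gives
  \<open>\<langle>x, k\<rangle> / a \<le> g x\<close> resp. \<open>\<ge> g x\<close>.

  Conversely let \<open>x\<close> lie in the open orthant and \<open>p0 = x / g x\<close>. Normalised integer vectors \<open>w\<close>
  approximate the normal \<open>n p0\<close>. Nonvanishing curvature makes \<open>p0\<close> the only point of \<open>N\<close> on its
  supporting hyperplane, so by compactness the point \<open>p\<close> of \<open>N\<close> extremising \<open>\<langle>-, w\<rangle>\<close> is close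
  to \<open>p0\<close>; there the Lagrange condition gives \<open>n p = w\<close>, so \<open>(k, \<langle>p, k\<rangle>)\<close> belongs to the spectrum
  and \<open>\<langle>x, k\<rangle> / \<langle>p, k\<rangle>\<close> is close to \<open>g x\<close>. Continuity of \<open>g\<close> extends this to the boundary of
  the orthant, so the supremum (infimum) equals \<open>g x\<close>; finally take \<open>x = \<hbar> m\<close>.\<close>

lemma has_derivative_vec_lambda:
  fixes F :: "'n::finite \<Rightarrow> 'a::real_normed_vector \<Rightarrow> real"
  assumes "\<And>i. (F i has_derivative L i) (at p)"
  shows "((\<lambda>x. \<chi> i. F i x) has_derivative (\<lambda>h. \<chi> i. L i h)) (at p)"
proof -
  have "((\<lambda>x. (\<chi> i. F i x) \<bullet> b) has_derivative (\<lambda>h. (\<chi> i. L i h) \<bullet> b)) (at p)"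
    if "b \<in> Basis" for b :: "real^'n"
  proof -
    obtain i where "b = axis i 1" using \<open>b \<in> Basis\<close> unfolding Basis_vec_def by auto
    then show ?thesis using assms[of i] by (simp add: inner_axis)
  qed
  then show ?thesis using has_derivative_componentwise_within[of _ _ p UNIV] by blast
qed

lemma is_partial_on_has_real_derivative:
  assumes "is_partial_on U g j D" and "z + t *\<^sub>R axis j 1 \<in> U"
  shows "((\<lambda>s. g (z + s *\<^sub>R axis j 1)) has_real_derivative D (z + t *\<^sub>R axis j 1)) (at t)"
proof -
  define w where "w = z + t *\<^sub>R axis j 1"
  have "((\<lambda>s. g (w + s *\<^sub>R axis j 1)) has_real_derivative D w) (at 0)"
    using assms unfolding is_partial_on_def w_def by blast
  then have "((\<lambda>s. g (w + (s - t) *\<^sub>R axis j 1)) has_real_derivative D w) (at t)"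
    using DERIV_shift[of "\<lambda>s. g (w + (s - t) *\<^sub>R axis j 1)" "D w" 0 t] by simp
  moreover have "(\<lambda>s. g (w + (s - t) *\<^sub>R axis j 1)) = (\<lambda>s. g (z + s *\<^sub>R axis j 1))"
    by (auto simp: w_def algebra_simps)
  ultimately have "((\<lambda>s. g (z + s *\<^sub>R axis j 1)) has_real_derivative D w) (at t)" by simp
  then show ?thesis by (simp only: w_def)
qed

lemma partials_increment_bound:
  fixes g :: "real^'n \<Rightarrow> real" and D :: "'n \<Rightarrow> real^'n \<Rightarrow> real"
  assumes partial: "\<And>i. is_partial_on U g i (D i)"
    and near: "\<And>v. (\<And>i. \<bar>v$i\<bar> \<le> \<bar>h$i\<bar>) \<Longrightarrow> x + v \<in> U \<and> (\<forall>i. \<bar>D i (x + v) - D i x\<bar> \<le> e)"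
    and "finite I"
  shows "\<bar>g (x + (\<chi> i. if i \<in> I then h$i else 0)) - g x - (\<Sum>i\<in>I. D i x * h$i)\<bar>
           \<le> real (card I) * e * norm h"
  using \<open>finite I\<close>
proof (induction I rule: finite_induct)
  \<comment> \<open>Move \<open>x\<close> towards \<open>x + h\<close> one coordinate at a time; each step is a one-variable
    mean value estimate.\<close>
  case empty
  have "(\<chi> i. if i \<in> {} then h$i else 0) = 0" by (simp add: vec_eq_iff)
  then show ?case by simp
next
  case (insert j I)
  define z where "z = x + (\<chi> i. if i \<in> I then h$i else 0)"
  define \<phi> where "\<phi> t = g (z + t *\<^sub>R axis j 1) - D j x * t" for t
  define S where "S = closed_segment 0 (h$j)"
  have near_segment: "z + t *\<^sub>R axis j 1 \<in> U \<and> \<bar>D j (z + t *\<^sub>R axis j 1) - D j x\<bar> \<le> e"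
    if "t \<in> S" for t
  proof -
    have "\<bar>((\<chi> i. if i \<in> I then h$i else 0) + t *\<^sub>R axis j 1)$i\<bar> \<le> \<bar>h$i\<bar>" for i
      using that insert.hyps by (auto simp: S_def axis_def closed_segment_eq_real_ivl split: if_splits)
    then show ?thesis using near by (simp add: z_def add.assoc)
  qed
  have "(\<phi> has_real_derivative D j (z + t *\<^sub>R axis j 1) - D j x) (at t within S)" if "t \<in> S" for t
  proof -
    have "((\<lambda>s. g (z + s *\<^sub>R axis j 1)) has_real_derivative D j (z + t *\<^sub>R axis j 1)) (at t)"
      using is_partial_on_has_real_derivative partial near_segment[OF that] by blast
    from DERIV_diff[OF this DERIV_cmult_Id[of "D j x" t]] show ?thesis
      unfolding \<phi>_def by (rule has_field_derivative_at_within)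
  qed
  then have "norm (\<phi> (h$j) - \<phi> 0) \<le> e * norm (h$j - 0)"
    using near_segment by (intro field_differentiable_bound[of S]) (auto simp: S_def)
  also have "\<dots> \<le> e * norm h"
    using component_le_norm_cart[of h j] near_segment[of 0] by (intro mult_left_mono) (auto simp: S_def)
  finally have step: "\<bar>g (z + h$j *\<^sub>R axis j 1) - g z - D j x * h$j\<bar> \<le> e * norm h"
    by (simp add: \<phi>_def)
  have "x + (\<chi> i. if i \<in> insert j I then h$i else 0) = z + h$j *\<^sub>R axis j 1"
    using insert.hyps by (auto simp: z_def vec_eq_iff axis_def)
  then have "\<bar>g (x + (\<chi> i. if i \<in> insert j I then h$i else 0)) - g x - (\<Sum>i\<in>insert j I. D i x * h$i)\<bar>
      \<le> \<bar>g (z + h$j *\<^sub>R axis j 1) - g z - D j x * h$j\<bar> + \<bar>g z - g x - (\<Sum>i\<in>I. D i x * h$i)\<bar>"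
    using insert.hyps by simp
  also have "\<dots> \<le> e * norm h + real (card I) * e * norm h"
    using step insert.IH by (simp add: z_def)
  finally show ?case using insert.hyps by (simp add: algebra_simps)
qed

lemma continuous_partials_imp_has_derivative:
  fixes g :: "real^'n \<Rightarrow> real" and D :: "'n \<Rightarrow> real^'n \<Rightarrow> real"
  assumes "open U" and "x \<in> U"
    and partial: "\<And>i. is_partial_on U g i (D i)" and cont: "\<And>i. continuous_on U (D i)"
  shows "(g has_derivative (\<lambda>h. (\<chi> i. D i x) \<bullet> h)) (at x)"
  unfolding has_derivative_at_alt
proof (intro conjI allI impI bounded_linear_inner_right)
  fix \<epsilon> :: real assume "\<epsilon> > 0"
  define e where "e = \<epsilon> / real CARD('n)"
  have "e > 0" using \<open>\<epsilon> > 0\<close> by (simp add: e_def)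
  have "\<forall>\<^sub>F y in nhds x. (\<forall>i. dist (D i y) (D i x) < e) \<and> y \<in> U"
  proof (intro eventually_conj eventually_all_finite allI)
    show "\<forall>\<^sub>F y in nhds x. dist (D i y) (D i x) < e" for i
    proof -
      have "isCont (D i) x" using cont \<open>open U\<close> \<open>x \<in> U\<close> continuous_on_eq_continuous_at by blast
      then have "(D i \<longlongrightarrow> D i x) (nhds x)" by (simp add: isCont_def tendsto_at_iff_tendsto_nhds)
      then show ?thesis using \<open>e > 0\<close> by (rule tendstoD)
    qed
    show "\<forall>\<^sub>F y in nhds x. y \<in> U" using \<open>open U\<close> \<open>x \<in> U\<close> eventually_nhds by blast
  qed
  then obtain r where "r > 0"
    and r: "\<And>y. dist y x < r \<Longrightarrow> (\<forall>i. dist (D i y) (D i x) < e) \<and> y \<in> U"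
    unfolding eventually_nhds_metric by (metis dist_commute)
  show "\<exists>r>0. \<forall>y. norm (y - x) < r \<longrightarrow>
          norm (g y - g x - (\<chi> i. D i x) \<bullet> (y - x)) \<le> \<epsilon> * norm (y - x)"
  proof (intro exI[of _ r] conjI allI impI \<open>r > 0\<close>)
    fix y assume y: "norm (y - x) < r"
    have "x + v \<in> U \<and> (\<forall>i. \<bar>D i (x + v) - D i x\<bar> \<le> e)" if "\<And>i. \<bar>v$i\<bar> \<le> \<bar>(y - x)$i\<bar>" for v
    proof -
      have "norm v \<le> norm (y - x)" by (rule norm_le_componentwise_cart) (use that in auto)
      then show ?thesis using r[of "x + v"] y by (auto simp: dist_norm dist_real_def less_imp_le)
    qed
    from partials_increment_bound[where h = "y - x" and I = UNIV, OF partial this]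
    have "\<bar>g y - g x - (\<Sum>i\<in>UNIV. D i x * (y - x)$i)\<bar> \<le> real CARD('n) * e * norm (y - x)"
      by (simp flip: vector_minus_component)
    then show "norm (g y - g x - (\<chi> i. D i x) \<bullet> (y - x)) \<le> \<epsilon> * norm (y - x)"
      by (simp add: inner_vec_def e_def)
  qed
qed

lemma has_derivative_nonpos_at_left_max:
  fixes \<psi> :: "real \<Rightarrow> real"
  assumes deriv: "(\<psi> has_derivative (\<lambda>t. t * c)) (at 0 within {0..1})"
    and max: "\<And>t. t \<in> {0..1} \<Longrightarrow> \<psi> t \<le> \<psi> 0"
  shows "c \<le> 0"
proof (rule ccontr)
  assume "\<not> c \<le> 0"
  then obtain r where "r > 0" and r: "\<And>t. t \<in> {0..1} \<Longrightarrow> norm (t - 0) < r \<Longrightarrow>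
      norm (\<psi> t - \<psi> 0 - (t - 0) * c) \<le> c / 2 * norm (t - 0)"
    using deriv unfolding has_derivative_within_alt by (metis half_gt_zero not_le)
  define t where "t = min (r / 2) 1"
  have t: "t > 0" "t \<in> {0..1}" "norm (t - 0) < r" using \<open>r > 0\<close> by (auto simp: t_def)
  have "\<bar>\<psi> t - \<psi> 0 - t * c\<bar> \<le> c / 2 * t" using r[OF t(2,3)] t by simp
  then have "t * c \<le> c / 2 * t" using max[OF t(2)] unfolding abs_le_iff by linarith
  then show False using t(1) \<open>\<not> c \<le> 0\<close> by (simp add: mult.commute)
qed

lemma norm_sgn_diff_le:
  fixes a b :: "'a::real_normed_vector"
  assumes "a \<noteq> 0" and "b \<noteq> 0"
  shows "norm (sgn a - sgn b) \<le> 2 * norm (a - b) / norm b"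
proof -
  have coef: "1 / norm b + (norm b - norm a) / (norm a * norm b) = 1 / norm a"
    using assms by (simp add: field_simps)
  have "sgn a - sgn b = (1 / norm b + (norm b - norm a) / (norm a * norm b)) *\<^sub>R a - (1 / norm b) *\<^sub>R b"
    unfolding coef by (simp add: sgn_div_norm inverse_eq_divide)
  also have "\<dots> = (1 / norm b) *\<^sub>R (a - b) + ((norm b - norm a) / (norm a * norm b)) *\<^sub>R a"
    by (simp add: algebra_simps)
  also have "norm \<dots> \<le> norm (a - b) / norm b + \<bar>norm b - norm a\<bar> / norm b"
    using assms by (intro order.trans[OF norm_triangle_ineq]) (simp add: abs_mult)
  also have "\<dots> = (norm (a - b) + \<bar>norm b - norm a\<bar>) / norm b"
    by (simp add: add_divide_distrib)
  also have "\<dots> \<le> 2 * norm (a - b) / norm b"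
    using norm_triangle_ineq3[of b a] by (intro divide_right_mono) (auto simp: norm_minus_commute)
  finally show ?thesis .
qed

lemma int_vec_sgn_dense:
  fixes u :: "real^'n"
  assumes "norm u = 1" and "0 < \<delta>"
  obtains k :: "int^'n" where "int_vec k \<noteq> 0" and "norm (sgn (int_vec k) - u) < \<delta>"
proof -
  define C where "C = real CARD('n)"
  have "0 < C" by (simp add: C_def)
  obtain j :: nat where "C / \<delta> + C < real j" using reals_Archimedean2 by blast
  then have "C < real j" "C < real j * \<delta>"
    using \<open>0 < C\<close> \<open>0 < \<delta>\<close> pos_divide_less_eq[OF \<open>0 < \<delta>\<close>, of C "real j"]
    by (smt (verit) divide_pos_pos)+
  define k where "k = (\<chi> i. round (real j * u$i))"
  define b where "b = real j *\<^sub>R u"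
  have "norm b = real j" using assms by (simp add: b_def)
  have "norm (int_vec k - b) \<le> (\<Sum>i\<in>UNIV. \<bar>(int_vec k - b)$i\<bar>)" by (rule norm_le_l1_cart)
  also have "\<dots> \<le> (\<Sum>i\<in>(UNIV::'n set). 1 / 2)"
    using of_int_round_abs_le by (intro sum_mono) (simp add: int_vec_def k_def b_def)
  finally have kb: "norm (int_vec k - b) \<le> C / 2" by (simp add: C_def)
  have "b \<noteq> 0" using \<open>norm b = real j\<close> \<open>C < real j\<close> \<open>0 < C\<close> by auto
  moreover have "int_vec k \<noteq> 0"
    using kb \<open>norm b = real j\<close> \<open>C < real j\<close> \<open>0 < C\<close> by auto
  ultimately have "norm (sgn (int_vec k) - sgn b) \<le> 2 * norm (int_vec k - b) / norm b"
    by (rule norm_sgn_diff_le[rotated])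
  also have "\<dots> \<le> C / real j"
    using kb \<open>norm b = real j\<close> \<open>C < real j\<close> \<open>0 < C\<close> by (simp add: divide_right_mono)
  also have "\<dots> < \<delta>"
    using \<open>C < real j * \<delta>\<close> \<open>C < real j\<close> \<open>0 < C\<close> by (simp add: divide_less_eq mult.commute)
  finally have "norm (sgn (int_vec k) - sgn b) < \<delta>" .
  moreover have "sgn b = u"
    using \<open>norm b = real j\<close> \<open>C < real j\<close> \<open>0 < C\<close> by (simp add: sgn_div_norm b_def)
  ultimately show ?thesis using that \<open>int_vec k \<noteq> 0\<close> by simp
qed

lemma cSUP_eq_approx:
  fixes \<phi> :: "'a \<Rightarrow> real"
  assumes upper: "\<And>a. a \<in> A \<Longrightarrow> \<phi> a \<le> c" and approx: "\<And>\<epsilon>. 0 < \<epsilon> \<Longrightarrow> \<exists>a\<in>A. c - \<epsilon> < \<phi> a"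
  shows "(SUP a\<in>A. \<phi> a) = c"
proof (rule cSup_eq_non_empty)
  show "\<phi> ` A \<noteq> {}" using approx[of 1] by auto
  show "\<And>y. y \<in> \<phi> ` A \<Longrightarrow> y \<le> c" using upper by auto
  show "c \<le> y" if "\<And>z. z \<in> \<phi> ` A \<Longrightarrow> z \<le> y" for y
  proof (rule field_le_epsilon)
    fix \<epsilon> :: real assume "0 < \<epsilon>"
    then obtain a where "a \<in> A" "c - \<epsilon> < \<phi> a" using approx by blast
    then show "c \<le> y + \<epsilon>" using that[of "\<phi> a"] by auto
  qed
qed

lemma cINF_eq_approx:
  fixes \<phi> :: "'a \<Rightarrow> real"
  assumes lower: "\<And>a. a \<in> A \<Longrightarrow> c \<le> \<phi> a" and approx: "\<And>\<epsilon>. 0 < \<epsilon> \<Longrightarrow> \<exists>a\<in>A. \<phi> a < c + \<epsilon>"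
  shows "(INF a\<in>A. \<phi> a) = c"
proof (rule cInf_eq_non_empty)
  show "\<phi> ` A \<noteq> {}" using approx[of 1] by auto
  show "\<And>y. y \<in> \<phi> ` A \<Longrightarrow> c \<le> y" using lower by auto
  show "y \<le> c" if "\<And>z. z \<in> \<phi> ` A \<Longrightarrow> y \<le> z" for y
  proof (rule field_le_epsilon)
    fix \<epsilon> :: real assume "0 < \<epsilon>"
    then obtain a where "a \<in> A" "\<phi> a < c + \<epsilon>" using approx by blast
    then show "y \<le> c + \<epsilon>" using that[of "\<phi> a"] by auto
  qed
qed

definition open_orthant :: "(real^'n) set" where
  "open_orthant = {p. \<forall>i. 0 < p$i}"

lemma open_open_orthant: "open open_orthant"
proof -
  have "open_orthant = (\<Inter>i\<in>UNIV. {p::real^'n. 0 < p$i})" by (auto simp: open_orthant_def)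
  then show ?thesis by (metis open_INT finite open_halfspace_component_gt_cart)
qed

lemma open_orthant_subset: "open_orthant \<subseteq> orthant"
  by (auto simp: open_orthant_def orthant_def less_imp_le)

lemma open_orthant_nonzero: "p \<in> open_orthant \<Longrightarrow> p \<noteq> 0"
  by (auto simp: open_orthant_def)

lemma at_within_orthant: "p \<in> open_orthant \<Longrightarrow> at p within orthant = at p"
  by (metis at_within_interior interior_maximal open_open_orthant open_orthant_subset subsetD)

lemma closed_orthant: "closed (orthant :: (real^'n) set)"
proof -
  have "orthant = (\<Inter>i\<in>UNIV. {p::real^'n. 0 \<le> p$i})" by (auto simp: orthant_def)
  then show ?thesis by (metis closed_INT closed_halfspace_component_ge_cart)
qed

lemma orthant_scaleR: "p \<in> orthant \<Longrightarrow> 0 \<le> t \<Longrightarrow> t *\<^sub>R p \<in> orthant"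
  by (auto simp: orthant_def)

lemma open_orthant_add_orthant: "p \<in> open_orthant \<Longrightarrow> q \<in> orthant \<Longrightarrow> p + q \<in> open_orthant"
  by (auto simp: orthant_def open_orthant_def add_pos_nonneg)

lemma one_in_open_orthant: "1 \<in> open_orthant"
  by (simp add: open_orthant_def)

lemma inner_orthant_nonneg: "p \<in> orthant \<Longrightarrow> q \<in> orthant \<Longrightarrow> 0 \<le> p \<bullet> q"
  by (auto simp: inner_vec_def orthant_def intro!: sum_nonneg)

section \<open>Toric profile functions\<close>

locale toric =
  fixes f :: "real^'n \<Rightarrow> real" and d :: real
  assumes d_pos: "0 < d" and profile: "toric_profile f d"
begin

lemma continuous_on_f: "continuous_on orthant f"
  using profile by (simp add: toric_profile_def)

lemma f_nonneg: "p \<in> orthant \<Longrightarrow> 0 \<le> f p"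
  using profile by (simp add: toric_profile_def)

lemma f_pos: "p \<in> orthant \<Longrightarrow> p \<noteq> 0 \<Longrightarrow> 0 < f p"
  using profile by (simp add: toric_profile_def)

lemma f_homogeneous: "p \<in> orthant \<Longrightarrow> 0 < t \<Longrightarrow> f (t *\<^sub>R p) = t powr d * f p"
  using profile by (simp add: toric_profile_def)

lemma grad_nonzero: "p \<in> level_set f \<Longrightarrow> grad f p \<noteq> 0"
  using profile by (simp add: toric_profile_def)

lemma unit_normal_in_orthant: "p \<in> level_set f \<Longrightarrow> unit_normal f p \<in> orthant"
  using profile by (simp add: toric_profile_def)

lemma f_zero: "f 0 = 0"
proof -
  have "f 0 = 2 powr d * f 0" using f_homogeneous[of 0 2] by (simp add: orthant_def)
  moreover have "2 powr d \<noteq> (1::real)" using d_pos by simp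
  ultimately show ?thesis by (metis mult_cancel_right1)
qed

lemma level_set_nonzero: "p \<in> level_set f \<Longrightarrow> p \<noteq> 0"
  using f_zero by (auto simp: level_set_def)

definition gauge :: "real^'n \<Rightarrow> real" where
  "gauge x = f x powr (1 / d)"

lemma gauge_nonneg: "0 \<le> gauge x"
  by (simp add: gauge_def)

lemma gauge_pos: "x \<in> orthant \<Longrightarrow> x \<noteq> 0 \<Longrightarrow> 0 < gauge x"
  using f_pos[of x] by (simp add: gauge_def)

lemma gauge_powr: "x \<in> orthant \<Longrightarrow> gauge x powr d = f x"
  using f_nonneg d_pos by (simp add: gauge_def powr_powr)

lemma gauge_homogeneous: "x \<in> orthant \<Longrightarrow> 0 < t \<Longrightarrow> gauge (t *\<^sub>R x) = t * gauge x"
  using f_nonneg d_pos by (simp add: gauge_def f_homogeneous powr_mult powr_powr)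

lemma gauge_level: "p \<in> level_set f \<Longrightarrow> gauge p = 1"
  by (simp add: gauge_def level_set_def)

lemma continuous_on_gauge: "continuous_on orthant gauge"
  unfolding gauge_def using continuous_on_f f_nonneg d_pos
  by (intro continuous_on_powr') (auto intro: continuous_intros)

lemma gauge_less_one_iff: "x \<in> orthant \<Longrightarrow> gauge x < 1 \<longleftrightarrow> f x < 1"
  using powr_less_mono2[OF d_pos gauge_nonneg, of x 1] powr_mono2[of d 1 "gauge x"] d_pos
  by (auto simp: gauge_powr not_less[symmetric])

lemma one_less_gauge_iff: "x \<in> orthant \<Longrightarrow> 1 < gauge x \<longleftrightarrow> 1 < f x"
  using powr_less_mono2[OF d_pos, of 1 "gauge x"] powr_mono2[of d "gauge x" 1] d_pos gauge_nonneg
  by (auto simp: gauge_powr not_less[symmetric])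

definition to_level :: "real^'n \<Rightarrow> real^'n" where
  "to_level x = (1 / gauge x) *\<^sub>R x"

lemma to_level_in_level_set:
  assumes "x \<in> orthant" and "x \<noteq> 0"
  shows "to_level x \<in> level_set f"
proof -
  have g: "0 < gauge x" using gauge_pos assms by blast
  have "f (to_level x) = (1 / gauge x) powr d * f x"
    unfolding to_level_def using f_homogeneous assms g by simp
  also have "\<dots> = 1"
    using gauge_powr[OF assms(1)] f_pos[OF assms] g by (simp add: powr_divide)
  finally show ?thesis using assms g by (simp add: level_set_def to_level_def orthant_scaleR)
qed

lemma level_set_nonempty: "level_set f \<noteq> {}"
  using to_level_in_level_set[of 1] one_in_open_orthant open_orthant_subset by auto

lemma bounded_level_set: "bounded (level_set f)"
proof -
  define S where "S = orthant \<inter> sphere (0::real^'n) 1"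
  have "compact S" unfolding S_def by (intro closed_Int_compact closed_orthant compact_sphere)
  moreover have "axis undefined 1 \<in> S" by (simp add: S_def orthant_def axis_def[of _ "1::real"] del: norm_axis_1) (simp add: norm_axis_1[unfolded axis_def])
  ultimately obtain u0 where "u0 \<in> S" and min: "\<And>u. u \<in> S \<Longrightarrow> f u0 \<le> f u"
    using continuous_attains_inf[of S f] continuous_on_subset[OF continuous_on_f]
    by (metis empty_iff inf_le1 S_def)
  then have c: "0 < f u0" using f_pos[of u0] by (force simp: S_def)
  have "norm p \<le> (1 / f u0) powr (1 / d)" if p: "p \<in> level_set f" for p
  proof -
    have "p \<in> orthant" "p \<noteq> 0" using p level_set_nonzero by (auto simp: level_set_def)
    define u where "u = (1 / norm p) *\<^sub>R p"
    have u: "u \<in> S" using \<open>p \<in> orthant\<close> \<open>p \<noteq> 0\<close> by (auto simp: S_def u_def orthant_scaleR)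
    have "1 = f (norm p *\<^sub>R u)" using p \<open>p \<noteq> 0\<close> by (simp add: u_def level_set_def)
    also have "\<dots> = norm p powr d * f u" using f_homogeneous u \<open>p \<noteq> 0\<close> by (simp add: S_def)
    finally have "norm p powr d * f u0 \<le> 1" using min[OF u] by (metis mult_left_mono powr_ge_zero)
    then have "norm p powr d \<le> 1 / f u0" using c by (simp add: field_simps)
    then have "(norm p powr d) powr (1 / d) \<le> (1 / f u0) powr (1 / d)"
      using d_pos by (intro powr_mono2) auto
    then show ?thesis using d_pos by (simp add: powr_powr)
  qed
  then show ?thesis by (auto simp: bounded_iff)
qed

lemma compact_level_set: "compact (level_set f)"
proof -
  have "level_set f = orthant \<inter> f -` {1}" by (auto simp: level_set_def)
  then have "closed (level_set f)"
    using continuous_closed_preimage[OF continuous_on_f closed_orthant closed_singleton] by simp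
  then show ?thesis using bounded_level_set by (simp add: compact_eq_bounded_closed)
qed

lemma exists_smooth_gradient:
  "\<exists>G. (\<forall>p\<in>orthant - {0}. (f has_derivative (\<lambda>h. G p \<bullet> h)) (at p within orthant)) \<and>
       (\<forall>p\<in>open_orthant. G differentiable (at p))"
proof -
  obtain U F where "open U" and U: "orthant - {0} \<subseteq> U" and "smooth_on U F"
    and F_eq: "\<forall>p\<in>orthant - {0}. F p = f p"
    using profile unfolding toric_profile_def by blast
  then obtain S where "F \<in> S"
    and S: "\<forall>g\<in>S. continuous_on U g \<and> (\<forall>i. \<exists>g'\<in>S. is_partial_on U g i g')"
    unfolding smooth_on_def by blast
  then obtain D where D: "\<forall>i. D i \<in> S \<and> is_partial_on U F i (D i)" by metis
  have "\<forall>i j. \<exists>g'. g' \<in> S \<and> is_partial_on U (D i) j g'" using S D by blast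
  then obtain DD where DD: "\<forall>i j. DD i j \<in> S \<and> is_partial_on U (D i) j (DD i j)"
    by metis
  define G where "G p = (\<chi> i. D i p)" for p
  have dF: "(F has_derivative (\<lambda>h. G p \<bullet> h)) (at p)" if "p \<in> U" for p
    unfolding G_def
    by (rule continuous_partials_imp_has_derivative[OF \<open>open U\<close> that]) (use D S in auto)
  have "(f has_derivative (\<lambda>h. G p \<bullet> h)) (at p within orthant)" if p: "p \<in> orthant - {0}" for p
  proof (rule has_derivative_transform_within[of F _ p orthant "norm p"])
    show "(F has_derivative (\<lambda>h. G p \<bullet> h)) (at p within orthant)"
      using dF[of p] p U by (auto intro: has_derivative_at_withinI)
    fix q assume "q \<in> orthant" "dist q p < norm p"
    then show "F q = f q" using F_eq by (auto simp: dist_norm)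
  qed (use p in auto)
  moreover have "G differentiable (at p)" if "p \<in> open_orthant" for p
  proof -
    have "p \<in> U" using that U open_orthant_subset open_orthant_nonzero by blast
    then have "(D i has_derivative (\<lambda>h. (\<chi> j. DD i j p) \<bullet> h)) (at p)" for i
      by (rule continuous_partials_imp_has_derivative[OF \<open>open U\<close>]) (use DD S in auto)
    then have "(G has_derivative (\<lambda>h. \<chi> i. (\<chi> j. DD i j p) \<bullet> h)) (at p)"
      unfolding G_def[abs_def] by (rule has_derivative_vec_lambda)
    then show ?thesis unfolding differentiable_def by blast
  qed
  ultimately show ?thesis by blast
qed

lemma has_derivative_grad:
  "p \<in> orthant \<Longrightarrow> p \<noteq> 0 \<Longrightarrow> (f has_derivative (\<lambda>h. grad f p \<bullet> h)) (at p within orthant)"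
  unfolding grad_def by (rule someI_ex) (use exists_smooth_gradient in blast)

lemma has_derivative_grad_at:
  "p \<in> open_orthant \<Longrightarrow> (f has_derivative (\<lambda>h. grad f p \<bullet> h)) (at p)"
  using has_derivative_grad[of p] open_orthant_subset open_orthant_nonzero
  by (auto simp: at_within_orthant)

lemma grad_differentiable:
  assumes "p \<in> open_orthant"
  shows "grad f differentiable (at p)"
proof -
  obtain G where G: "\<forall>q\<in>orthant - {0}. (f has_derivative (\<lambda>h. G q \<bullet> h)) (at q within orthant)"
    and "\<forall>q\<in>open_orthant. G differentiable (at q)"
    using exists_smooth_gradient by blast
  then obtain L where L: "(G has_derivative L) (at p)"
    using assms unfolding differentiable_def by blast
  have "grad f q = G q" if "q \<in> open_orthant" for q
  proof -
    have "q \<in> orthant - {0}" using that open_orthant_subset open_orthant_nonzero by blast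
    then have "(f has_derivative (\<lambda>h. G q \<bullet> h)) (at q within orthant)" using G by blast
    then have "(f has_derivative (\<lambda>h. G q \<bullet> h)) (at q)"
      by (simp only: at_within_orthant[OF that])
    with has_derivative_grad_at[OF that] have "(\<lambda>h. grad f q \<bullet> h) = (\<lambda>h. G q \<bullet> h)"
      by (rule has_derivative_unique)
    then show ?thesis by (metis vector_eq_rdot)
  qed
  then have "(grad f has_derivative L) (at p)"
    by (intro has_derivative_transform_within_open[OF L open_open_orthant assms]) simp
  then show ?thesis unfolding differentiable_def by blast
qed

lemma unit_normal_differentiable:
  assumes "p \<in> level_set f" and "p \<in> open_orthant"
  shows "unit_normal f differentiable (at p)"
proof -
  have "grad f differentiable (at p)" using grad_differentiable[OF assms(2)] .
  moreover have "norm differentiable (at (grad f p))"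
    using has_derivative_norm[OF grad_nonzero[OF assms(1)]] unfolding differentiable_def by blast
  ultimately have "(\<lambda>q. norm (grad f q)) differentiable (at p)"
    using differentiable_chain_at[of "grad f" p norm] by (simp add: o_def)
  then have "(\<lambda>q. inverse (norm (grad f q)) *\<^sub>R grad f q) differentiable (at p)"
    using grad_nonzero[OF assms(1)] \<open>grad f differentiable (at p)\<close>
    by (intro differentiable_scaleR differentiable_inverse) auto
  then show ?thesis by (simp add: unit_normal_def[abs_def] inverse_eq_divide)
qed

lemma euler_homogeneous:
  assumes p: "p \<in> orthant" "p \<noteq> 0"
  shows "grad f p \<bullet> p = d * f p"
proof -
  define S where "S = {-1/2<..<(1/2::real)}"
  define \<gamma> where "\<gamma> s = (1 + s) *\<^sub>R p" for s
  have "\<gamma> ` S \<subseteq> orthant" using p by (auto simp: S_def \<gamma>_def intro!: orthant_scaleR)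
  then have "(f has_derivative (\<lambda>h. grad f p \<bullet> h)) (at (\<gamma> 0) within \<gamma> ` S)"
    using has_derivative_subset[OF has_derivative_grad[OF p]] by (simp add: \<gamma>_def)
  moreover have "(\<gamma> has_derivative (\<lambda>s. s *\<^sub>R p)) (at 0 within S)"
    unfolding \<gamma>_def by (auto intro!: derivative_eq_intros simp: algebra_simps)
  ultimately have "((f \<circ> \<gamma>) has_derivative (\<lambda>s. s * (grad f p \<bullet> p))) (at 0)"
    using diff_chain_within at_within_open[of 0 S] by (fastforce simp: S_def o_def)
  moreover have "((f \<circ> \<gamma>) has_derivative (\<lambda>s. s * (d * f p))) (at 0)"
  proof (rule has_derivative_transform_within_open[where s = S])
    have "((\<lambda>s. (1 + s) powr d * f p) has_real_derivative d * f p) (at 0)"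
      by (auto intro!: derivative_eq_intros)
    then show "((\<lambda>s. (1 + s) powr d * f p) has_derivative (\<lambda>s. s * (d * f p))) (at 0)"
      by (simp add: has_field_derivative_def mult.commute[of _ "d * f p"])
    show "(1 + s) powr d * f p = (f \<circ> \<gamma>) s" if "s \<in> S" for s
      using f_homogeneous[OF p(1), of "1 + s"] that by (simp add: S_def \<gamma>_def)
  qed (auto simp: S_def)
  ultimately have "(\<lambda>s. s * (grad f p \<bullet> p)) = (\<lambda>s. s * (d * f p))"
    by (rule has_derivative_unique)
  then show ?thesis by (metis mult_1)
qed

lemma grad_eq_scaleR_unit_normal:
  "p \<in> level_set f \<Longrightarrow> grad f p = norm (grad f p) *\<^sub>R unit_normal f p"
  using grad_nonzero by (simp add: unit_normal_def)

lemma norm_unit_normal: "p \<in> level_set f \<Longrightarrow> norm (unit_normal f p) = 1"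
  using grad_nonzero by (simp add: unit_normal_def)

lemma inner_unit_normal_pos:
  assumes "p \<in> level_set f"
  shows "0 < p \<bullet> unit_normal f p"
proof -
  have "norm (grad f p) * (p \<bullet> unit_normal f p) = grad f p \<bullet> p"
    by (subst (2) grad_eq_scaleR_unit_normal[OF assms]) (simp add: inner_commute)
  also have "\<dots> = d"
    using euler_homogeneous assms level_set_nonzero by (auto simp: level_set_def)
  finally show ?thesis using d_pos by (metis zero_less_mult_pos zero_less_norm_iff grad_nonzero[OF assms])
qed

lemma marked_action_spectrumE:
  assumes "(k, a) \<in> marked_action_spectrum f"
  obtains p c where "p \<in> level_set f" and "0 < c" and "unit_normal f p = c *\<^sub>R int_vec k"
    and "a = p \<bullet> int_vec k" and "0 < a" and "int_vec k \<in> orthant"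
proof -
  obtain p c where p: "p \<in> level_set f" and "0 < c" and n: "unit_normal f p = c *\<^sub>R int_vec k"
    and a: "a = p \<bullet> int_vec k"
    using assms unfolding marked_action_spectrum_def by auto
  have "c * a = p \<bullet> unit_normal f p" by (simp add: n a)
  then have "0 < a" using inner_unit_normal_pos[OF p] \<open>0 < c\<close> by (metis zero_less_mult_pos)
  moreover have "int_vec k \<in> orthant"
    using unit_normal_in_orthant[OF p] \<open>0 < c\<close> by (auto simp: n orthant_def zero_le_mult_iff)
  ultimately show ?thesis using that p \<open>0 < c\<close> n a by blast
qed

lemma action_ratio_nonneg:
  assumes "(k, a) \<in> marked_action_spectrum f" and "x \<in> orthant"
  shows "0 \<le> x \<bullet> int_vec k / a"
  using assms inner_orthant_nonneg by (auto elim!: marked_action_spectrumE intro!: divide_nonneg_pos)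

lemma grad_parallel_at_extremum:
  assumes "\<sigma> \<noteq> 0" and p: "p \<in> level_set f" "p \<in> open_orthant"
    and extremal: "\<And>q. q \<in> level_set f \<Longrightarrow> \<sigma> * (q \<bullet> u) \<le> \<sigma> * (p \<bullet> u)"
  shows "u = ((p \<bullet> u) / d) *\<^sub>R grad f p"
proof -
  have fp: "f p = 1" using p by (simp add: level_set_def)
  have tangent: "u \<bullet> v = 0" if v: "grad f p \<bullet> v = 0" for v
  proof -
    obtain r where "0 < r" and r: "ball p r \<subseteq> open_orthant"
      using open_open_orthant p(2) open_contains_ball by blast
    define \<delta> where "\<delta> = r / (norm v + 1)"
    have "0 < \<delta>" using \<open>0 < r\<close> by (simp add: \<delta>_def add_nonneg_pos)
    have near: "p + s *\<^sub>R v \<in> open_orthant" if "\<bar>0 - s\<bar> < \<delta>" for s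
    proof -
      have "norm (s *\<^sub>R v) \<le> \<bar>s\<bar> * (norm v + 1)" by (simp add: mult_left_mono)
      also have "\<dots> < r" using that by (simp add: \<delta>_def add_nonneg_pos pos_less_divide_eq)
      finally show ?thesis using r by (auto simp: dist_norm)
    qed
    define \<phi> where "\<phi> s = \<sigma> * ((p + s *\<^sub>R v) \<bullet> u / gauge (p + s *\<^sub>R v))" for s
    \<comment> \<open>\<open>\<phi> s = \<sigma> * (to_level (p + s *\<^sub>R v) \<bullet> u)\<close> has a local maximum at \<open>0\<close>\<close>
    have "((\<lambda>s. p + s *\<^sub>R v) has_derivative (\<lambda>s. s *\<^sub>R v)) (at 0)"
      by (auto intro!: derivative_eq_intros)
    from diff_chain_at[OF this, of f "\<lambda>h. grad f p \<bullet> h"]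
    have "((\<lambda>s. f (p + s *\<^sub>R v)) has_real_derivative 0) (at 0)"
      using has_derivative_grad_at[OF p(2)] v
      by (simp add: o_def has_field_derivative_def mult_zero_left[abs_def])
    then have "((\<lambda>s. gauge (p + s *\<^sub>R v)) has_real_derivative 0) (at 0)"
      unfolding gauge_def using DERIV_fun_powr[of _ 0 0 "1 / d"] fp by simp
    then have "(\<phi> has_real_derivative \<sigma> * (v \<bullet> u)) (at 0)"
      unfolding \<phi>_def using gauge_level[OF p(1)]
      by (auto intro!: derivative_eq_intros simp: inner_add_left)
    moreover have "\<phi> s \<le> \<phi> 0" if "\<bar>0 - s\<bar> < \<delta>" for s
    proof -
      have "to_level (p + s *\<^sub>R v) \<in> level_set f"
        using near[OF that] open_orthant_subset open_orthant_nonzero by (intro to_level_in_level_set) auto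
      from extremal[OF this] show ?thesis
        using gauge_level[OF p(1)] by (simp add: \<phi>_def to_level_def)
    qed
    ultimately have "\<sigma> * (v \<bullet> u) = 0" using \<open>0 < \<delta>\<close> by (blast intro: DERIV_local_max)
    then show ?thesis using \<open>\<sigma> \<noteq> 0\<close> by (simp add: inner_commute)
  qed
  define c where "c = (u \<bullet> grad f p) / (grad f p \<bullet> grad f p)"
  define w where "w = u - c *\<^sub>R grad f p"
  have "grad f p \<bullet> w = 0"
    using grad_nonzero[OF p(1)] by (simp add: w_def c_def inner_diff_right inner_commute)
  moreover from tangent[OF this] have "u \<bullet> w = 0" .
  ultimately have "w \<bullet> w = 0" by (simp add: w_def inner_diff_left inner_commute)
  then have u: "u = c *\<^sub>R grad f p" by (simp add: w_def)
  have "grad f p \<bullet> p = d"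
    using euler_homogeneous p(1) level_set_nonzero[OF p(1)] fp by (simp add: level_set_def)
  then have "c = (p \<bullet> u) / d" using d_pos by (simp add: u inner_commute)
  then show ?thesis using u by simp
qed

lemma unit_normal_at_extremum:
  assumes "\<sigma> \<noteq> 0" and p: "p \<in> level_set f" "p \<in> open_orthant"
    and "norm w = 1" and "0 < p \<bullet> w"
    and extremal: "\<And>q. q \<in> level_set f \<Longrightarrow> \<sigma> * (q \<bullet> w) \<le> \<sigma> * (p \<bullet> w)"
  shows "unit_normal f p = w"
proof -
  have w: "w = ((p \<bullet> w) / d) *\<^sub>R grad f p"
    by (rule grad_parallel_at_extremum[OF assms(1) p extremal])
  have "(d / (p \<bullet> w)) *\<^sub>R w = grad f p"
    using \<open>0 < p \<bullet> w\<close> d_pos by (subst w) simp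
  then have "grad f p = (d / (p \<bullet> w)) *\<^sub>R w" ..
  then show ?thesis using \<open>norm w = 1\<close> \<open>0 < p \<bullet> w\<close> d_pos by (simp add: unit_normal_def)
qed

lemma normal_curvature_eq_0_if_unit_normal_const:
  assumes p: "p \<in> level_set f" "p \<in> open_orthant" and "0 < \<tau>"
    and const: "\<And>t. t \<in> {0..\<tau>} \<Longrightarrow> unit_normal f (p + t *\<^sub>R v) = unit_normal f p"
  shows "normal_curvature f p v = 0"
proof -
  define L where "L = (SOME L. (unit_normal f has_derivative L) (at p within orthant))"
  have "\<exists>L. (unit_normal f has_derivative L) (at p within orthant)"
    using unit_normal_differentiable[OF p] unfolding differentiable_def
    by (auto simp: at_within_orthant[OF p(2)])
  then have L: "(unit_normal f has_derivative L) (at p)"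
    unfolding L_def using at_within_orthant[OF p(2)] by (metis someI_ex)
  have "((\<lambda>t. p + t *\<^sub>R v) has_derivative (\<lambda>t. t *\<^sub>R v)) (at 0)"
    by (auto intro!: derivative_eq_intros)
  from diff_chain_at[OF this, of "unit_normal f" L] L
  have "((\<lambda>t. unit_normal f (p + t *\<^sub>R v)) has_derivative (\<lambda>t. t *\<^sub>R L v)) (at 0)"
    using linear_cmul[OF has_derivative_linear[OF L]] by (simp add: o_def)
  then have "((\<lambda>t. unit_normal f (p + t *\<^sub>R v)) has_vector_derivative L v) (at 0 within {0..\<tau>})"
    by (auto simp: has_vector_derivative_def intro: has_derivative_at_withinI)
  moreover have "((\<lambda>t. unit_normal f (p + t *\<^sub>R v)) has_vector_derivative 0) (at 0 within {0..\<tau>})"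
    by (rule has_vector_derivative_transform_within[of "\<lambda>t. unit_normal f p" _ _ _ 1])
      (use const \<open>0 < \<tau>\<close> in auto)
  moreover have "at 0 within {0..\<tau>} \<noteq> bot" using \<open>0 < \<tau>\<close> by (simp add: at_within_Icc_at_right)
  ultimately have "L v = 0" using vector_derivative_unique_within by blast
  then show ?thesis by (simp add: normal_curvature_def L_def[symmetric])
qed

lemma marked_action_spectrumI:
  assumes "p \<in> level_set f" and "int_vec k \<noteq> 0" and "unit_normal f p = sgn (int_vec k)"
  shows "(k, p \<bullet> int_vec k) \<in> marked_action_spectrum f"
proof -
  have "k \<noteq> 0" using assms(2) by (auto simp: int_vec_def vec_eq_iff)
  moreover have "unit_normal f p = (1 / norm (int_vec k)) *\<^sub>R int_vec k"
    using assms(3) by (simp add: sgn_div_norm inverse_eq_divide)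
  ultimately show ?thesis
    using assms unfolding marked_action_spectrum_def by (fastforce intro!: exI[of _ "1 / norm (int_vec k)"])
qed

end

section \<open>Supporting hyperplanes of the level set\<close>

text \<open>The parameter \<open>\<sigma> = 1\<close> covers the strictly convex case and \<open>\<sigma> = -1\<close> the strictly concave
  one: \<open>{q. \<sigma> * f q \<le> \<sigma>}\<close> is the sublevel resp. superlevel set of \<open>f\<close>, and every inequality
  carrying the factor \<open>\<sigma>\<close> is reversed in the concave case.\<close>

locale toric_side = toric f d for f :: "real^'n \<Rightarrow> real" and d :: real +
  fixes \<sigma> :: real
  assumes sign: "\<sigma> = 1 \<or> \<sigma> = -1"
    and convex_side: "convex {q \<in> orthant. \<sigma> * f q \<le> \<sigma>}"
begin

lemma grad_support:
  assumes p: "p \<in> level_set f" and q: "q \<in> orthant" "\<sigma> * f q \<le> \<sigma>"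
  shows "\<sigma> * (grad f p \<bullet> (q - p)) \<le> 0"
proof -
  define K where "K = {q \<in> orthant. \<sigma> * f q \<le> \<sigma>}"
  define \<gamma> where "\<gamma> t = p + t *\<^sub>R (q - p)" for t
  have "p \<in> K" "q \<in> K" using p q by (auto simp: K_def level_set_def)
  have \<gamma>K: "\<gamma> t \<in> K" if "t \<in> {0..1}" for t
  proof -
    have "(1 - t) *\<^sub>R p + t *\<^sub>R q \<in> K"
      using convex_side \<open>p \<in> K\<close> \<open>q \<in> K\<close> that unfolding K_def convex_def by auto
    then show ?thesis by (simp add: \<gamma>_def algebra_simps)
  qed
  then have "\<gamma> ` {0..1} \<subseteq> orthant" by (auto simp: K_def)
  then have df: "(f has_derivative (\<lambda>h. grad f p \<bullet> h)) (at (\<gamma> 0) within \<gamma> ` {0..1})"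
    using has_derivative_subset[OF has_derivative_grad] p level_set_nonzero
    by (simp add: \<gamma>_def level_set_def)
  have "(\<gamma> has_derivative (\<lambda>t. t *\<^sub>R (q - p))) (at 0 within {0..1})"
    unfolding \<gamma>_def by (auto intro!: derivative_eq_intros)
  from diff_chain_within[OF this df]
  have "((f \<circ> \<gamma>) has_derivative (\<lambda>t. grad f p \<bullet> (t *\<^sub>R (q - p)))) (at 0 within {0..1})"
    by (simp add: o_def)
  then have "((\<lambda>t. \<sigma> * f (\<gamma> t)) has_derivative (\<lambda>t. \<sigma> * (grad f p \<bullet> (t *\<^sub>R (q - p)))))
      (at 0 within {0..1})"
    unfolding o_def by (rule has_derivative_mult_right)
  then have "((\<lambda>t. \<sigma> * f (\<gamma> t)) has_derivative (\<lambda>t. t * (\<sigma> * (grad f p \<bullet> (q - p)))))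
      (at 0 within {0..1})"
    by (simp add: mult.left_commute)
  moreover have "\<sigma> * f (\<gamma> t) \<le> \<sigma> * f (\<gamma> 0)" if "t \<in> {0..1}" for t
    using \<gamma>K[OF that] p by (simp add: K_def \<gamma>_def level_set_def)
  ultimately show ?thesis by (rule has_derivative_nonpos_at_left_max)
qed

lemma unit_normal_support:
  assumes p: "p \<in> level_set f" and q: "q \<in> orthant" "\<sigma> * f q \<le> \<sigma>"
  shows "\<sigma> * (q \<bullet> unit_normal f p) \<le> \<sigma> * (p \<bullet> unit_normal f p)"
proof -
  have "\<sigma> * (grad f p \<bullet> (q - p))
      = norm (grad f p) * (\<sigma> * (q \<bullet> unit_normal f p - p \<bullet> unit_normal f p))"
    by (subst grad_eq_scaleR_unit_normal[OF p]) (simp add: inner_diff_right inner_commute)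
  then have "norm (grad f p) * (\<sigma> * (q \<bullet> unit_normal f p - p \<bullet> unit_normal f p)) \<le> 0"
    using grad_support[OF assms] by linarith
  then have "\<sigma> * (q \<bullet> unit_normal f p - p \<bullet> unit_normal f p) \<le> 0"
    using grad_nonzero[OF p] by (simp add: mult_le_0_iff)
  then show ?thesis by (simp add: right_diff_distrib)
qed

lemma action_ratio_bound:
  assumes ka: "(k, a) \<in> marked_action_spectrum f" and x: "x \<in> orthant"
  shows "\<sigma> * (x \<bullet> int_vec k / a) \<le> \<sigma> * gauge x"
proof (cases "x = 0")
  case True
  then show ?thesis by (simp add: gauge_def f_zero)
next
  case False
  obtain p c where p: "p \<in> level_set f" and "0 < c" and n: "unit_normal f p = c *\<^sub>R int_vec k"
    and a: "a = p \<bullet> int_vec k" and "0 < a"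
    using ka by (rule marked_action_spectrumE)
  have "0 < gauge x" using gauge_pos x False by blast
  have "to_level x \<in> level_set f" using to_level_in_level_set x False by blast
  then have "\<sigma> * (to_level x \<bullet> unit_normal f p) \<le> \<sigma> * (p \<bullet> unit_normal f p)"
    using unit_normal_support[OF p] sign by (auto simp: level_set_def)
  moreover have "to_level x \<bullet> unit_normal f p = c * (x \<bullet> int_vec k / gauge x)"
    by (simp add: to_level_def n)
  moreover have "p \<bullet> unit_normal f p = c * a" by (simp add: n a)
  ultimately have "c * (\<sigma> * (x \<bullet> int_vec k / gauge x)) \<le> c * (\<sigma> * a)"
    by (simp only: mult.left_commute[of \<sigma> c])
  then have "\<sigma> * (x \<bullet> int_vec k / gauge x) \<le> \<sigma> * a"
    using \<open>0 < c\<close> by (rule mult_left_le_imp_le)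
  with sign show ?thesis
    using \<open>0 < gauge x\<close> \<open>0 < a\<close> by (auto simp: pos_divide_le_eq pos_le_divide_eq mult.commute)
qed

lemma supporting_hyperplane_meets_level_set:
  assumes p: "p \<in> level_set f" and y: "y \<in> orthant" "\<sigma> * f y \<le> \<sigma>"
    and on_plane: "y \<bullet> unit_normal f p = p \<bullet> unit_normal f p"
  shows "y \<in> level_set f"
proof (rule ccontr)
  assume "y \<notin> level_set f"
  then have "\<sigma> * f y < \<sigma>" using y sign by (auto simp: level_set_def)
  then have "\<sigma> * gauge y < \<sigma>"
    using sign gauge_less_one_iff[OF y(1)] one_less_gauge_iff[OF y(1)] by auto
  define h where "h = p \<bullet> unit_normal f p"
  have "0 < h" using inner_unit_normal_pos[OF p] by (simp add: h_def)
  then have "y \<noteq> 0" using on_plane by (auto simp: h_def)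
  then have "0 < gauge y" "to_level y \<in> level_set f"
    using gauge_pos to_level_in_level_set y(1) by auto
  moreover have "to_level y \<bullet> unit_normal f p = h / gauge y"
    by (simp add: to_level_def on_plane h_def)
  ultimately have "\<sigma> * (h / gauge y) \<le> \<sigma> * h"
    using unit_normal_support[OF p, of "to_level y"] sign by (auto simp: level_set_def h_def)
  with sign show False
  proof (elim disjE)
    assume "\<sigma> = 1"
    then have "h < h / gauge y"
      using \<open>0 < h\<close> \<open>0 < gauge y\<close> \<open>\<sigma> * gauge y < \<sigma>\<close> by (simp add: less_divide_eq)
    then show False using \<open>\<sigma> * (h / gauge y) \<le> \<sigma> * h\<close> \<open>\<sigma> = 1\<close> by simp
  next
    assume "\<sigma> = -1"
    then have "h / gauge y < h"
      using \<open>0 < h\<close> \<open>0 < gauge y\<close> \<open>\<sigma> * gauge y < \<sigma>\<close> by (simp add: divide_less_eq)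
    then show False using \<open>\<sigma> * (h / gauge y) \<le> \<sigma> * h\<close> \<open>\<sigma> = -1\<close> by simp
  qed
qed

lemma segment_in_level_set:
  assumes p: "p \<in> level_set f" and q: "q \<in> level_set f"
    and on_plane: "q \<bullet> unit_normal f p = p \<bullet> unit_normal f p" and "t \<in> {0..1}"
  shows "p + t *\<^sub>R (q - p) \<in> level_set f"
proof (rule supporting_hyperplane_meets_level_set[OF p])
  have "(1 - t) *\<^sub>R p + t *\<^sub>R q \<in> {q \<in> orthant. \<sigma> * f q \<le> \<sigma>}"
    using convex_side p q \<open>t \<in> {0..1}\<close> unfolding convex_def by (auto simp: level_set_def)
  moreover have "(1 - t) *\<^sub>R p + t *\<^sub>R q = p + t *\<^sub>R (q - p)" by (simp add: algebra_simps)
  ultimately show "p + t *\<^sub>R (q - p) \<in> orthant" "\<sigma> * f (p + t *\<^sub>R (q - p)) \<le> \<sigma>" by auto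
  show "(p + t *\<^sub>R (q - p)) \<bullet> unit_normal f p = p \<bullet> unit_normal f p"
    using on_plane by (simp add: inner_add_left inner_diff_left)
qed

lemma action_ratio_side_bound:
  assumes "(k, a) \<in> marked_action_spectrum f" and "y \<in> orthant"
  shows "\<sigma> * (y \<bullet> int_vec k / a) \<le> gauge y"
  using sign
proof (elim disjE)
  assume "\<sigma> = 1"
  then show ?thesis using action_ratio_bound[OF assms] by simp
next
  assume "\<sigma> = -1"
  then show ?thesis using action_ratio_nonneg[OF assms] gauge_nonneg[of y] by simp
qed

end

section \<open>Points of the level set with rational normals\<close>

locale toric_strict = toric_side f d \<sigma> for f :: "real^'n \<Rightarrow> real" and d \<sigma> :: real +
  assumes curvature_nonzero:
    "\<forall>p\<in>level_set f. \<forall>v\<in>tangent_dirs f p. normal_curvature f p v \<noteq> 0"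
begin

lemma support_point_unique:
  assumes p0: "p0 \<in> level_set f" "p0 \<in> open_orthant" and q: "q \<in> level_set f"
    and on_plane: "q \<bullet> unit_normal f p0 = p0 \<bullet> unit_normal f p0"
  shows "q = p0"
proof (rule ccontr)
  \<comment> \<open>Otherwise the segment from \<open>p0\<close> to \<open>q\<close> lies in \<open>N\<close> and, near \<open>p0\<close>, has the constant
    normal \<open>u0\<close>, so the normal curvature in direction \<open>q - p0\<close> vanishes.\<close>
  assume "q \<noteq> p0"
  define u0 where "u0 = unit_normal f p0"
  define v where "v = q - p0"
  have "v \<noteq> 0" and "v \<bullet> u0 = 0"
    using \<open>q \<noteq> p0\<close> on_plane by (auto simp: v_def u0_def inner_diff_left)
  have on_level: "p0 + t *\<^sub>R v \<in> level_set f" if "t \<in> {0..1}" for t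
    using segment_in_level_set[OF p0(1) q on_plane that] by (simp add: v_def)
  obtain r where "0 < r" and r: "ball p0 r \<subseteq> open_orthant"
    using open_open_orthant p0(2) open_contains_ball by blast
  define \<tau> where "\<tau> = min 1 (r / (2 * norm v))"
  have "0 < \<tau>" using \<open>0 < r\<close> \<open>v \<noteq> 0\<close> by (simp add: \<tau>_def)
  have "unit_normal f (p0 + t *\<^sub>R v) = u0" if t: "t \<in> {0..\<tau>}" for t
  proof (rule unit_normal_at_extremum)
    show "\<sigma> \<noteq> 0" using sign by auto
    show "p0 + t *\<^sub>R v \<in> level_set f" using on_level t by (simp add: \<tau>_def)
    have "norm (t *\<^sub>R v) = t * norm v" using t by simp
    also have "\<dots> \<le> r / (2 * norm v) * norm v"
      using t by (intro mult_right_mono) (auto simp: \<tau>_def)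
    also have "\<dots> < r" using \<open>0 < r\<close> \<open>v \<noteq> 0\<close> by simp
    finally show "p0 + t *\<^sub>R v \<in> open_orthant" using r by (auto simp: dist_norm)
    show "norm u0 = 1" using norm_unit_normal[OF p0(1)] by (simp add: u0_def)
    show "0 < (p0 + t *\<^sub>R v) \<bullet> u0"
      using inner_unit_normal_pos[OF p0(1)] \<open>v \<bullet> u0 = 0\<close> by (simp add: u0_def inner_add_left)
    show "\<sigma> * (q' \<bullet> u0) \<le> \<sigma> * ((p0 + t *\<^sub>R v) \<bullet> u0)" if "q' \<in> level_set f" for q'
      using unit_normal_support[OF p0(1), of q'] that \<open>v \<bullet> u0 = 0\<close>
      by (simp add: u0_def inner_add_left level_set_def)
  qed
  then have "normal_curvature f p0 v = 0"
    using normal_curvature_eq_0_if_unit_normal_const[OF p0 \<open>0 < \<tau>\<close>] by (simp add: u0_def)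
  moreover have "v \<in> tangent_dirs f p0"
    using \<open>v \<noteq> 0\<close> \<open>v \<bullet> u0 = 0\<close> grad_eq_scaleR_unit_normal[OF p0(1)]
    by (simp add: tangent_dirs_def u0_def) (metis inner_commute inner_scaleR_left mult_zero_right)
  ultimately show False using curvature_nonzero p0(1) by blast
qed

lemma support_gap:
  assumes p0: "p0 \<in> level_set f" "p0 \<in> open_orthant" and "0 < r"
  obtains \<gamma> where "0 < \<gamma>" and "\<And>q. q \<in> level_set f \<Longrightarrow> q \<notin> ball p0 r \<Longrightarrow>
      \<sigma> * (q \<bullet> unit_normal f p0) \<le> \<sigma> * (p0 \<bullet> unit_normal f p0) - \<gamma>"
proof (cases "level_set f - ball p0 r = {}")
  case True
  then show ?thesis by (intro that[of 1]) auto
next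
  case False
  define u0 where "u0 = unit_normal f p0"
  have "compact (level_set f - ball p0 r)"
    using compact_level_set by (simp add: Diff_eq compact_Int_closed closed_Compl)
  moreover have "continuous_on (level_set f - ball p0 r) (\<lambda>q. \<sigma> * (q \<bullet> u0))"
    by (intro continuous_intros)
  ultimately obtain qm where qm: "qm \<in> level_set f - ball p0 r"
    and max: "\<And>q. q \<in> level_set f - ball p0 r \<Longrightarrow> \<sigma> * (q \<bullet> u0) \<le> \<sigma> * (qm \<bullet> u0)"
    using continuous_attains_sup[OF _ False] by blast
  have "qm \<noteq> p0" using qm \<open>0 < r\<close> by auto
  then have "qm \<bullet> u0 \<noteq> p0 \<bullet> u0"
    using support_point_unique[OF p0] qm by (auto simp: u0_def)
  moreover have "\<sigma> * (qm \<bullet> u0) \<le> \<sigma> * (p0 \<bullet> u0)"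
    using unit_normal_support[OF p0(1), of qm] qm by (auto simp: u0_def level_set_def)
  ultimately have "\<sigma> * (qm \<bullet> u0) < \<sigma> * (p0 \<bullet> u0)" using sign by auto
  then show ?thesis
    using max by (intro that[of "\<sigma> * (p0 \<bullet> u0) - \<sigma> * (qm \<bullet> u0)"]) (auto simp: u0_def)
qed

lemma extremizer_near:
  assumes p0: "p0 \<in> level_set f" "p0 \<in> open_orthant" and "0 < r"
  obtains \<delta> where "0 < \<delta>"
    and "\<And>w p. norm (w - unit_normal f p0) < \<delta> \<Longrightarrow> p \<in> level_set f \<Longrightarrow>
           (\<And>q. q \<in> level_set f \<Longrightarrow> \<sigma> * (q \<bullet> w) \<le> \<sigma> * (p \<bullet> w)) \<Longrightarrow> p \<in> ball p0 r"
proof -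
  define u0 where "u0 = unit_normal f p0"
  obtain \<gamma> where "0 < \<gamma>" and gap: "\<And>q. q \<in> level_set f \<Longrightarrow> q \<notin> ball p0 r \<Longrightarrow>
      \<sigma> * (q \<bullet> u0) \<le> \<sigma> * (p0 \<bullet> u0) - \<gamma>"
    using support_gap[OF p0 \<open>0 < r\<close>] unfolding u0_def by blast
  obtain R where "0 < R" and R: "\<And>q. q \<in> level_set f \<Longrightarrow> norm q \<le> R"
    using bounded_level_set by (auto simp: bounded_pos)
  define \<delta> where "\<delta> = \<gamma> / (2 * R + 1)"
  have "0 < \<delta>" using \<open>0 < \<gamma>\<close> \<open>0 < R\<close> by (simp add: \<delta>_def)
  have "2 * R * \<delta> = \<gamma> - \<delta>" using \<open>0 < R\<close> by (simp add: \<delta>_def field_simps)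
  then have "2 * R * \<delta> < \<gamma>" using \<open>0 < \<delta>\<close> by linarith
  have "p \<in> ball p0 r" if w: "norm (w - u0) < \<delta>" and p: "p \<in> level_set f"
    and ext: "\<And>q. q \<in> level_set f \<Longrightarrow> \<sigma> * (q \<bullet> w) \<le> \<sigma> * (p \<bullet> w)" for w p
  proof (rule ccontr)
    assume "p \<notin> ball p0 r"
    have close: "\<bar>\<sigma> * (q \<bullet> w) - \<sigma> * (q \<bullet> u0)\<bar> \<le> R * \<delta>" if "q \<in> level_set f" for q
    proof -
      have "\<bar>\<sigma> * (q \<bullet> w) - \<sigma> * (q \<bullet> u0)\<bar> = \<bar>q \<bullet> (w - u0)\<bar>"
        using sign by (elim disjE) (simp_all add: inner_diff_right abs_minus_commute)
      also have "\<dots> \<le> norm q * norm (w - u0)" by (rule Cauchy_Schwarz_ineq2)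
      also have "\<dots> \<le> R * \<delta>" using R[OF that] w \<open>0 < R\<close> by (intro mult_mono) auto
      finally show ?thesis .
    qed
    have "\<sigma> * (p \<bullet> w) \<le> \<sigma> * (p0 \<bullet> u0) - \<gamma> + R * \<delta>"
      using close[OF p] gap[OF p \<open>p \<notin> ball p0 r\<close>] by linarith
    also have "\<dots> < \<sigma> * (p0 \<bullet> u0) - R * \<delta>" using \<open>2 * R * \<delta> < \<gamma>\<close> by simp
    also have "\<dots> \<le> \<sigma> * (p0 \<bullet> w)" using close[OF p0(1)] by linarith
    finally show False using ext[OF p0(1)] by simp
  qed
  then show ?thesis using that \<open>0 < \<delta>\<close> unfolding u0_def by blast
qed

lemma rational_normal_point_near:
  assumes p0: "p0 \<in> level_set f" "p0 \<in> open_orthant" and "0 < r"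
  obtains k p where "p \<in> level_set f" and "int_vec k \<noteq> 0" and "unit_normal f p = sgn (int_vec k)"
    and "\<bar>p0 \<bullet> unit_normal f p - p \<bullet> unit_normal f p\<bar> < r"
    and "\<bar>p0 \<bullet> unit_normal f p - p0 \<bullet> unit_normal f p0\<bar> < r"
proof -
  define u0 where "u0 = unit_normal f p0"
  define h0 where "h0 = p0 \<bullet> u0"
  have "0 < h0" using inner_unit_normal_pos[OF p0(1)] by (simp add: h0_def u0_def)
  obtain r0 where "0 < r0" and r0: "ball p0 r0 \<subseteq> open_orthant"
    using open_open_orthant p0(2) open_contains_ball by blast
  define \<rho> where "\<rho> = min r (min r0 (h0 / 2))"
  have "0 < \<rho>" using \<open>0 < r\<close> \<open>0 < r0\<close> \<open>0 < h0\<close> by (simp add: \<rho>_def)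
  have \<rho>: "\<rho> \<le> r" "\<rho> \<le> r0" "\<rho> \<le> h0 / 2" by (auto simp: \<rho>_def)
  obtain \<delta> where "0 < \<delta>"
    and near: "\<And>w p. norm (w - u0) < \<delta> \<Longrightarrow> p \<in> level_set f \<Longrightarrow>
      (\<And>q. q \<in> level_set f \<Longrightarrow> \<sigma> * (q \<bullet> w) \<le> \<sigma> * (p \<bullet> w)) \<Longrightarrow> p \<in> ball p0 \<rho>"
    using extremizer_near[OF p0 \<open>0 < \<rho>\<close>] unfolding u0_def by blast
  define \<delta>' where "\<delta>' = min \<delta> (\<rho> / (norm p0 + 1))"
  have "0 < \<delta>'" using \<open>0 < \<delta>\<close> \<open>0 < \<rho>\<close> by (simp add: \<delta>'_def add_nonneg_pos)
  obtain k where "int_vec k \<noteq> 0" and w_u0: "norm (sgn (int_vec k) - u0) < \<delta>'"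
    using int_vec_sgn_dense[OF norm_unit_normal[OF p0(1)] \<open>0 < \<delta>'\<close>] unfolding u0_def by blast
  define w where "w = sgn (int_vec k)"
  have "norm w = 1" using \<open>int_vec k \<noteq> 0\<close> by (simp add: w_def norm_sgn)
  have "continuous_on (level_set f) (\<lambda>q. \<sigma> * (q \<bullet> w))" by (intro continuous_intros)
  then obtain p where p: "p \<in> level_set f"
    and ext: "\<And>q. q \<in> level_set f \<Longrightarrow> \<sigma> * (q \<bullet> w) \<le> \<sigma> * (p \<bullet> w)"
    using continuous_attains_sup[OF compact_level_set level_set_nonempty] by blast
  have "p \<in> ball p0 \<rho>" using near[OF _ p ext] w_u0 by (simp add: w_def \<delta>'_def)
  then have "p \<in> open_orthant" using r0 \<rho>(2) by auto
  have close_p: "\<bar>p0 \<bullet> w - p \<bullet> w\<bar> < \<rho>"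
  proof -
    have "\<bar>p0 \<bullet> w - p \<bullet> w\<bar> \<le> norm (p0 - p) * norm w"
      by (metis Cauchy_Schwarz_ineq2 inner_diff_left)
    then show ?thesis using \<open>p \<in> ball p0 \<rho>\<close> \<open>norm w = 1\<close> by (simp add: dist_norm)
  qed
  have close_w: "\<bar>p0 \<bullet> w - h0\<bar> < \<rho>"
  proof -
    have "\<bar>p0 \<bullet> w - h0\<bar> \<le> norm p0 * norm (w - u0)"
      by (metis Cauchy_Schwarz_ineq2 h0_def inner_diff_right)
    also have "\<dots> \<le> norm p0 * (\<rho> / (norm p0 + 1))"
      using w_u0 by (intro mult_left_mono) (auto simp: w_def \<delta>'_def)
    also have "\<dots> = \<rho> * (norm p0 / (norm p0 + 1))" by (simp add: field_simps)
    also have "\<dots> < \<rho> * 1"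
      using \<open>0 < \<rho>\<close> by (intro mult_strict_left_mono) (auto simp: add_nonneg_pos)
    finally show ?thesis by simp
  qed
  have "0 < p \<bullet> w"
    using close_p close_w \<rho>(3) unfolding abs_less_iff by linarith
  then have "unit_normal f p = w"
    using sign by (intro unit_normal_at_extremum[OF _ p \<open>p \<in> open_orthant\<close> \<open>norm w = 1\<close> _ ext]) auto
  then show ?thesis
    using that[OF p \<open>int_vec k \<noteq> 0\<close>] close_p close_w \<rho>(1) by (simp add: w_def h0_def u0_def)
qed

lemma action_ratio_approx_open:
  assumes x: "x \<in> open_orthant" and "0 < \<epsilon>"
  obtains k a where "(k, a) \<in> marked_action_spectrum f"
    and "\<sigma> * gauge x - \<epsilon> < \<sigma> * (x \<bullet> int_vec k / a)"
proof -
  define g where "g = gauge x"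
  have "0 < g" using gauge_pos x open_orthant_subset open_orthant_nonzero by (auto simp: g_def)
  define p0 where "p0 = to_level x"
  have p0: "p0 \<in> level_set f" "p0 \<in> open_orthant"
    using to_level_in_level_set x open_orthant_subset open_orthant_nonzero \<open>0 < g\<close>
    by (auto simp: p0_def to_level_def g_def open_orthant_def)
  have x_eq: "x = g *\<^sub>R p0" using \<open>0 < g\<close> by (simp add: p0_def to_level_def g_def)
  define h0 where "h0 = p0 \<bullet> unit_normal f p0"
  have "0 < h0" using inner_unit_normal_pos[OF p0(1)] by (simp add: h0_def)
  define r where "r = min (h0 / 4) (\<epsilon> * h0 / (2 * g + 1))"
  have "0 < r" using \<open>0 < h0\<close> \<open>0 < \<epsilon>\<close> \<open>0 < g\<close> by (simp add: r_def)
  have r: "r \<le> h0 / 4" "r \<le> \<epsilon> * h0 / (2 * g + 1)"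
    unfolding r_def by (rule min.cobounded1, rule min.cobounded2)
  obtain k p where p: "p \<in> level_set f" and "int_vec k \<noteq> 0" and n: "unit_normal f p = sgn (int_vec k)"
    and close_p: "\<bar>p0 \<bullet> unit_normal f p - p \<bullet> unit_normal f p\<bar> < r"
    and close_w: "\<bar>p0 \<bullet> unit_normal f p - h0\<bar> < r"
    using rational_normal_point_near[OF p0 \<open>0 < r\<close>] unfolding h0_def by blast
  define w where "w = unit_normal f p"
  have kA: "(k, p \<bullet> int_vec k) \<in> marked_action_spectrum f"
    by (rule marked_action_spectrumI[OF p \<open>int_vec k \<noteq> 0\<close> n])
  have "h0 / 2 < p \<bullet> w"
    using close_p close_w r(1) unfolding w_def abs_less_iff by linarith
  have "int_vec k = norm (int_vec k) *\<^sub>R w"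
    using \<open>int_vec k \<noteq> 0\<close> by (simp add: w_def n sgn_div_norm)
  then have "x \<bullet> int_vec k = norm (int_vec k) * (g * (p0 \<bullet> w))"
    and "p \<bullet> int_vec k = norm (int_vec k) * (p \<bullet> w)"
    by (metis inner_scaleR_left inner_scaleR_right x_eq)+
  then have ratio: "x \<bullet> int_vec k / (p \<bullet> int_vec k) = g * (p0 \<bullet> w) / (p \<bullet> w)"
    using \<open>int_vec k \<noteq> 0\<close> by simp
  have "g * (p0 \<bullet> w) / (p \<bullet> w) - g = g * (p0 \<bullet> w - p \<bullet> w) / (p \<bullet> w)"
    using \<open>h0 / 2 < p \<bullet> w\<close> \<open>0 < h0\<close> by (simp add: diff_divide_distrib right_diff_distrib)
  then have "\<bar>g * (p0 \<bullet> w) / (p \<bullet> w) - g\<bar> = g * \<bar>p0 \<bullet> w - p \<bullet> w\<bar> / (p \<bullet> w)"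
    using \<open>0 < g\<close> \<open>h0 / 2 < p \<bullet> w\<close> \<open>0 < h0\<close> by (simp add: abs_mult abs_divide)
  also have "\<dots> \<le> g * r / (h0 / 2)"
    using close_p \<open>h0 / 2 < p \<bullet> w\<close> \<open>0 < g\<close> \<open>0 < h0\<close>
    by (intro frac_le mult_left_mono) (auto simp: w_def)
  also have "\<dots> \<le> g * (\<epsilon> * h0 / (2 * g + 1)) / (h0 / 2)"
    using \<open>0 < g\<close> \<open>0 < h0\<close> r(2) by (intro divide_right_mono mult_left_mono) auto
  also have "\<dots> = \<epsilon> * (2 * g / (2 * g + 1))"
    using \<open>0 < h0\<close> by simp
  also have "\<dots> < \<epsilon> * 1"
    using \<open>0 < g\<close> \<open>0 < \<epsilon>\<close> by (intro mult_strict_left_mono) auto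
  finally have "\<bar>x \<bullet> int_vec k / (p \<bullet> int_vec k) - g\<bar> < \<epsilon>" by (simp add: ratio)
  then show ?thesis
    using that[OF kA] sign by (auto simp: g_def abs_less_iff)
qed

lemma action_ratio_approx:
  assumes x: "x \<in> orthant" and "0 < \<epsilon>"
  obtains k a where "(k, a) \<in> marked_action_spectrum f"
    and "\<sigma> * gauge x - \<epsilon> < \<sigma> * (x \<bullet> int_vec k / a)"
proof -
  have "0 < \<epsilon> / 4" using \<open>0 < \<epsilon>\<close> by simp
  then obtain \<eta>0 where "0 < \<eta>0"
    and cont: "\<And>y. y \<in> orthant \<Longrightarrow> dist y x < \<eta>0 \<Longrightarrow> dist (gauge y) (gauge x) < \<epsilon> / 4"
    using continuous_on_gauge x unfolding continuous_on_iff by blast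
  define c1 where "c1 = gauge 1"
  have "0 \<le> c1" by (simp add: c1_def gauge_nonneg)
  define \<eta> where "\<eta> = min (\<eta>0 / (norm (1::real^'n) + 1)) (\<epsilon> / (4 * (c1 + 1)))"
  have "0 < \<eta>" using \<open>0 < \<eta>0\<close> \<open>0 < \<epsilon>\<close> \<open>0 \<le> c1\<close> by (simp add: \<eta>_def add_nonneg_pos)
  have \<eta>: "\<eta> \<le> \<eta>0 / (norm (1::real^'n) + 1)" "\<eta> \<le> \<epsilon> / (4 * (c1 + 1))"
    unfolding \<eta>_def by (rule min.cobounded1, rule min.cobounded2)
  define x' where "x' = \<eta> *\<^sub>R 1 + x"
  have "x' \<in> open_orthant"
    unfolding x'_def using \<open>0 < \<eta>\<close> x by (intro open_orthant_add_orthant) (auto simp: open_orthant_def)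
  have "dist x' x = \<eta> * norm (1::real^'n)" using \<open>0 < \<eta>\<close> by (simp add: x'_def dist_norm)
  also have "\<dots> < \<eta> * (norm (1::real^'n) + 1)" using \<open>0 < \<eta>\<close> by simp
  also have "\<dots> \<le> \<eta>0" using \<eta>(1) by (simp add: add_nonneg_pos pos_le_divide_eq)
  finally have "\<bar>gauge x' - gauge x\<bar> < \<epsilon> / 4"
    using cont \<open>x' \<in> open_orthant\<close> open_orthant_subset by (auto simp: dist_real_def)
  then have "gauge x - \<epsilon> / 4 < gauge x'" "gauge x' < gauge x + \<epsilon> / 4"
    unfolding abs_less_iff by linarith+
  then have "\<sigma> * gauge x - \<epsilon> / 4 < \<sigma> * gauge x'" using sign by auto
  obtain k a where ka: "(k, a) \<in> marked_action_spectrum f"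
    and approx: "\<sigma> * gauge x' - \<epsilon> / 2 < \<sigma> * (x' \<bullet> int_vec k / a)"
    using action_ratio_approx_open[OF \<open>x' \<in> open_orthant\<close>, of "\<epsilon> / 2"] \<open>0 < \<epsilon>\<close> by auto
  have "1 \<in> orthant" using one_in_open_orthant open_orthant_subset by blast
  then have "\<sigma> * ((\<eta> *\<^sub>R 1) \<bullet> int_vec k / a) \<le> gauge (\<eta> *\<^sub>R 1)"
    using \<open>0 < \<eta>\<close> by (intro action_ratio_side_bound[OF ka] orthant_scaleR) auto
  also have "\<dots> = \<eta> * c1" using gauge_homogeneous[OF \<open>1 \<in> orthant\<close> \<open>0 < \<eta>\<close>] by (simp add: c1_def)
  also have "\<eta> * c1 \<le> \<epsilon> / (4 * (c1 + 1)) * c1" using \<eta>(2) \<open>0 \<le> c1\<close> by (rule mult_right_mono)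
  also have "\<dots> = \<epsilon> / 4 * (c1 / (c1 + 1))" by simp
  also have "\<dots> < \<epsilon> / 4 * 1"
    using \<open>0 \<le> c1\<close> \<open>0 < \<epsilon>\<close> by (intro mult_strict_left_mono) auto
  finally have "\<sigma> * ((\<eta> *\<^sub>R 1) \<bullet> int_vec k / a) < \<epsilon> / 4" by simp
  moreover have "\<sigma> * (x' \<bullet> int_vec k / a) = \<sigma> * (x \<bullet> int_vec k / a) + \<sigma> * ((\<eta> *\<^sub>R 1) \<bullet> int_vec k / a)"
    unfolding x'_def inner_add_left add_divide_distrib distrib_left by simp
  ultimately show ?thesis
    using that[OF ka] approx \<open>\<sigma> * gauge x - \<epsilon> / 4 < \<sigma> * gauge x'\<close> by linarith
qed

end

section \<open>The EBK spectrum\<close>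

context toric
begin

lemma toric_strict_if_strictly_convex:
  assumes "strictly_convex_level f"
  shows "toric_strict f d 1"
proof unfold_locales
  show "convex {q \<in> orthant. 1 * f q \<le> 1}"
    using assms by (simp add: strictly_convex_level_def)
  show "\<forall>p\<in>level_set f. \<forall>v\<in>tangent_dirs f p. normal_curvature f p v \<noteq> 0"
  proof (intro ballI)
    fix p v assume "p \<in> level_set f" "v \<in> tangent_dirs f p"
    then have "0 < normal_curvature f p v" using assms unfolding strictly_convex_level_def by blast
    then show "normal_curvature f p v \<noteq> 0" by simp
  qed
qed simp

lemma toric_strict_if_strictly_concave:
  assumes "strictly_concave_level f"
  shows "toric_strict f d (-1)"
proof unfold_locales
  show "convex {q \<in> orthant. -1 * f q \<le> -1}"
    using assms by (simp add: strictly_concave_level_def)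
  show "\<forall>p\<in>level_set f. \<forall>v\<in>tangent_dirs f p. normal_curvature f p v \<noteq> 0"
  proof (intro ballI)
    fix p v assume "p \<in> level_set f" "v \<in> tangent_dirs f p"
    then have "normal_curvature f p v < 0" using assms unfolding strictly_concave_level_def by blast
    then show "normal_curvature f p v \<noteq> 0" by simp
  qed
qed simp

lemma f_eq_SUP_action_ratio:
  assumes "strictly_convex_level f" and "x \<in> orthant"
  shows "f x = (SUP ka\<in>marked_action_spectrum f. x \<bullet> int_vec (fst ka) / snd ka) powr d"
proof -
  interpret toric_strict f d 1 using assms(1) by (rule toric_strict_if_strictly_convex)
  have "(SUP ka\<in>marked_action_spectrum f. x \<bullet> int_vec (fst ka) / snd ka) = gauge x"
  proof (rule cSUP_eq_approx)
    show "x \<bullet> int_vec (fst ka) / snd ka \<le> gauge x" if "ka \<in> marked_action_spectrum f" for ka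
      using action_ratio_bound[of "fst ka" "snd ka" x] that assms(2) by simp
    show "\<exists>ka\<in>marked_action_spectrum f. gauge x - \<epsilon> < x \<bullet> int_vec (fst ka) / snd ka"
      if \<epsilon>: "0 < \<epsilon>" for \<epsilon>
    proof -
      obtain k a where "(k, a) \<in> marked_action_spectrum f"
        and "1 * gauge x - \<epsilon> < 1 * (x \<bullet> int_vec k / a)"
        by (rule action_ratio_approx[OF assms(2) \<epsilon>])
      then show ?thesis by force
    qed
  qed
  then show ?thesis using gauge_powr[OF assms(2)] by simp
qed

lemma f_eq_INF_action_ratio:
  assumes "strictly_concave_level f" and "x \<in> orthant"
  shows "f x = (INF ka\<in>marked_action_spectrum f. x \<bullet> int_vec (fst ka) / snd ka) powr d"
proof -
  interpret toric_strict f d "-1" using assms(1) by (rule toric_strict_if_strictly_concave)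
  have "(INF ka\<in>marked_action_spectrum f. x \<bullet> int_vec (fst ka) / snd ka) = gauge x"
  proof (rule cINF_eq_approx)
    show "gauge x \<le> x \<bullet> int_vec (fst ka) / snd ka" if "ka \<in> marked_action_spectrum f" for ka
      using action_ratio_bound[of "fst ka" "snd ka" x] that assms(2) by simp
    show "\<exists>ka\<in>marked_action_spectrum f. x \<bullet> int_vec (fst ka) / snd ka < gauge x + \<epsilon>"
      if \<epsilon>: "0 < \<epsilon>" for \<epsilon>
    proof -
      obtain k a where "(k, a) \<in> marked_action_spectrum f"
        and "-1 * gauge x - \<epsilon> < -1 * (x \<bullet> int_vec k / a)"
        by (rule action_ratio_approx[OF assms(2) \<epsilon>])
      then show ?thesis by force
    qed
  qed
  then show ?thesis using gauge_powr[OF assms(2)] by simp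
qed

end

theorem theorem1p2:
  fixes f :: "real ^ 'n \<Rightarrow> real" and d hbar :: real
  assumes "0 < d" and "0 < hbar" and "toric_profile f d"
  shows "(strictly_convex_level f \<longrightarrow>
            (\<forall>m. f (hbar *\<^sub>R nat_vec m) =
                 (SUP ka\<in>marked_action_spectrum f. hbar * (nat_vec m \<bullet> int_vec (fst ka)) / snd ka) powr d) \<and>
            sigma_EBK f hbar = {(SUP ka\<in>marked_action_spectrum f. hbar * (nat_vec m \<bullet> int_vec (fst ka)) / snd ka) powr d | m. True})
       \<and> (strictly_concave_level f \<longrightarrow>
            (\<forall>m. f (hbar *\<^sub>R nat_vec m) =
                 (INF ka\<in>marked_action_spectrum f. hbar * (nat_vec m \<bullet> int_vec (fst ka)) / snd ka) powr d) \<and>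
            sigma_EBK f hbar = {(INF ka\<in>marked_action_spectrum f. hbar * (nat_vec m \<bullet> int_vec (fst ka)) / snd ka) powr d | m. True})"
proof -
  interpret toric f d using assms by unfold_locales
  have lattice_point: "hbar *\<^sub>R nat_vec m \<in> orthant" for m :: "nat^'n"
    using \<open>0 < hbar\<close> by (simp add: orthant_def nat_vec_def)
  have ratio: "hbar * (nat_vec m \<bullet> k) / a = (hbar *\<^sub>R nat_vec m) \<bullet> k / a"
    for m :: "nat^'n" and k :: "real^'n" and a
    by simp
  show ?thesis
    unfolding sigma_EBK_def ratio
    by (intro conjI impI allI)
      (simp_all only: f_eq_SUP_action_ratio[OF _ lattice_point] f_eq_INF_action_ratio[OF _ lattice_point])
qed

end
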